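(* For an integer $m\ge0$ let $\mathbf{S}_m=\{1,\dots,m\}^2$, where a square $(i,j)$ has column $i$ and row $j$. Two distinct squares $(i,j),(i',j')$ attack each other (as anassas, with moves $(0,1)$ and $(1,1)$) if $i=i'$ or $i-j=i'-j'$. Let $A_{\mathbf{S}}(m,k,p)$ be the number of $k$-element subsets of $\mathbf{S}_m$ with no two elements attacking each other and with exactly $p$ elements $(i,j)$ satisfying $j<i$ (strictly below the main diagonal); set $A_{\mathbf{S}}(m,k,p)=0$ if $k<0$ or $p<0$. Then for integers $m\ge1$ and $k,p\ge 0$, $$A_{\mathbf{S}}(m,k,p)=A_{\mathbf{S}}(m-1,k,p)+(m-k+1)A_{\mathbf{S}}(m-1,k-1,p)+(m-p)A_{\mathbf{S}}(m-1,k-1,p-1)+(m-p)(m-k+1)A_{\mathbf{S}}(m-1,k-2,p-1),$$ with $A_{\mathbf{S}}(0,k,p)=\delta_{k0}\delta_{p0}$, $A_{\mathbf{S}}(m,0,p)=\delta_{p0}$, $A_{\mathbf{S}}(m,1,p)=\left\{ {m+1 \atop m}\right\}\delta_{p0}+\left\{ {m \atop m-1}\right\}\delta_{p1}$ and $A_{\mathbf{S}}(m,k,0)=\left\{ {m+1 \atop m-k+1}\right\}$. Moreover, for all integers $m,k,p\ge0$, $$A_{\mathbf{S}}(m,k,p)=\sum_{j=0}^{p}(m-k+j)_j\binom{k-p-1}{j}\binom{k-j}{k-p}\left\{ {m+1 \atop m-k+j+1}\right\}.$$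
   Context: $\delta_{ij}$ is the Kronecker delta and $(x)_j=x(x-1)\cdots(x-j+1)$, $(x)_0=1$. Stirling numbers of the second kind $\left\{ {n \atop r}\right\}$ are used in the extended sense for all integers: usual values for $n,r\ge0$; $\left\{ {n \atop r}\right\}=\left[{-r\atop -n}\right]$ (unsigned Stirling number of the first kind) for $n,r\le0$; and $0$ when one of $n,r$ is positive and the other negative. Binomial coefficients are extended to all integers $n,r$ (Kronenburg's convention): $\binom{n}{r}=n(n-1)\cdots(n-r+1)/r!$ if $r\ge0$; $\binom{n}{r}=(-1)^{n-r}\binom{-r-1}{n-r}$ if $r\le n<0$; and $\binom{n}{r}=0$ otherwise. *)

theory Defs
  imports Main "HOL-Combinatorics.Stirling"
begin

definition ffact_int :: "int \<Rightarrow> nat \<Rightarrow> int" where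
  "ffact_int x j = (\<Prod>i<j. x - int i)"

definition Stirling2_ext :: "int \<Rightarrow> int \<Rightarrow> int" where
  "Stirling2_ext n r =
     (if 0 \<le> n \<and> 0 \<le> r then int (Stirling (nat n) (nat r))
      else if n \<le> 0 \<and> r \<le> 0 then int (stirling (nat (- r)) (nat (- n)))
      else 0)"

text \<open>Binomial coefficients extended to all integers (Kronenburg); n(n-1)...(n-r+1)/r! is an exact integer division.\<close>
definition binom_ext :: "int \<Rightarrow> int \<Rightarrow> int" where
  "binom_ext n r =
     (if 0 \<le> r then ffact_int n (nat r) div fact (nat r)
      else if r \<le> n \<and> n < 0 then (-1) ^ nat (n - r) * (ffact_int (- r - 1) (nat (n - r)) div fact (nat (n - r)))
      else 0)"

definition board :: "nat \<Rightarrow> (nat \<times> nat) set" where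
  "board m = {1..m} \<times> {1..m}"

definition attacks :: "nat \<times> nat \<Rightarrow> nat \<times> nat \<Rightarrow> bool" where
  "attacks a b \<longleftrightarrow> a \<noteq> b \<and>
     (fst a = fst b \<or> int (fst a) - int (snd a) = int (fst b) - int (snd b))"

definition non_attacking :: "(nat \<times> nat) set \<Rightarrow> bool" where
  "non_attacking B \<longleftrightarrow> (\<forall>a\<in>B. \<forall>b\<in>B. \<not> attacks a b)"

definition A_S :: "nat \<Rightarrow> int \<Rightarrow> int \<Rightarrow> int" where
  "A_S m k p =
     (if k < 0 \<or> p < 0 then 0
      else int (card {B. B \<subseteq> board m \<and> card B = nat k \<and> non_attacking B \<and>
                       card {x \<in> B. snd x < fst x} = nat p}))"

end

theory Submission
  imports Defs
begin

text \<open>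
  Label a square (i, j) by its column i and by its diagonal: Inr (i - j) if j < i and
  Inl (m + i - j) otherwise.  A set of squares is non-attacking iff no two of its squares share a
  column or a label, i.e. iff its image is a rook placement on the board of labelled cells
  (i, Inr d) with d < i \<le> m and (i, Inl l) with i \<le> l \<le> m.  This board grows with m: the
  board for m arises from the one for m - 1 by adding column m with the labels Inr 1, ..., Inr (m - 1)
  and then the label Inl m in the columns 1, ..., m.  The cells of each addition attack each other,
  so a placement uses at most one of them, and a placement of size k - 1 with p' cells below the
  diagonal leaves m - 1 - p' free cells in the new column and m - k + 1 free cells with the new
  label.

  The summation formula is proved by showing that it satisfies the same recurrence and initial
  values.  For p < k this comes down to an identity between the coefficients of each Stirling
  number, which follows from Pascal's rule and the absorption identity; for p = k the binomial
  coefficients are signs and the sum telescopes to the Stirling number S(m, m - k).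
\<close>

section \<open>Rook placements\<close>

definition rook_placement :: "('a \<times> 'b) set \<Rightarrow> ('a \<times> 'b) set \<Rightarrow> bool" where
  "rook_placement K T \<longleftrightarrow> T \<subseteq> K \<and> inj_on fst T \<and> inj_on snd T"

definition rook_placements ::
    "('a \<times> 'b) set \<Rightarrow> ('a \<times> 'b \<Rightarrow> bool) \<Rightarrow> nat \<Rightarrow> nat \<Rightarrow> ('a \<times> 'b) set set" where
  "rook_placements K marked k p =
     {T. rook_placement K T \<and> card T = k \<and> card {x \<in> T. marked x} = p}"

definition rook_count :: "('a \<times> 'b) set \<Rightarrow> ('a \<times> 'b \<Rightarrow> bool) \<Rightarrow> int \<Rightarrow> int \<Rightarrow> int" where
  "rook_count K marked k p =
     (if k < 0 \<or> p < 0 then 0 else int (card (rook_placements K marked (nat k) (nat p))))"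

definition non_attacked :: "('a \<times> 'b) set \<Rightarrow> 'a \<times> 'b \<Rightarrow> bool" where
  "non_attacked Q x \<longleftrightarrow> (\<forall>y\<in>Q. fst y \<noteq> fst x \<and> snd y \<noteq> snd x)"

definition mutually_attacking :: "('a \<times> 'b) set \<Rightarrow> bool" where
  "mutually_attacking N \<longleftrightarrow> (\<forall>x\<in>N. \<forall>y\<in>N. fst x = fst y \<or> snd x = snd y)"

lemma finite_rook_placements: "finite K \<Longrightarrow> finite (rook_placements K marked k p)"
  by (rule finite_subset[of _ "Pow K"]) (auto simp: rook_placements_def rook_placement_def)

lemma rook_placement_insert_iff:
  "x \<notin> Q \<Longrightarrow> rook_placement K (insert x Q) \<longleftrightarrow> x \<in> K \<and> rook_placement K Q \<and> non_attacked Q x"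
  unfolding rook_placement_def non_attacked_def by (auto simp: image_iff)

lemma card_filter_insert:
  "finite Q \<Longrightarrow> x \<notin> Q \<Longrightarrow> card {y \<in> insert x Q. P y} = card {y \<in> Q. P y} + of_bool (P x)"
proof -
  assume "finite Q" "x \<notin> Q"
  moreover have "{y \<in> insert x Q. P y} = (if P x then insert x {y \<in> Q. P y} else {y \<in> Q. P y})"
    by auto
  ultimately show ?thesis by simp
qed

lemma rook_placement_remove_line_cell:
  assumes T: "rook_placement (K \<union> N) T" and N: "mutually_attacking N" and x: "x \<in> T" "x \<in> N"
  shows "rook_placement K (T - {x})"
proof -
  have "y \<in> K" if "y \<in> T" "y \<noteq> x" for y
  proof (rule ccontr)
    assume "y \<notin> K"
    with T that have "y \<in> N" by (auto simp: rook_placement_def)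
    with N x have "fst x = fst y \<or> snd x = snd y" by (auto simp: mutually_attacking_def)
    with T that x show False by (auto simp: rook_placement_def inj_on_def)
  qed
  with T show ?thesis by (auto simp: rook_placement_def intro: inj_on_subset)
qed

lemma rook_placements_meeting_line:
  assumes disj: "K \<inter> N = {}" and N: "mutually_attacking N"
  shows "{T. rook_placement (K \<union> N) T \<and> T \<inter> N \<noteq> {}} =
           (\<lambda>(Q, x). insert x Q) ` (SIGMA Q:{Q. rook_placement K Q}. {x \<in> N. non_attacked Q x})"
proof (intro equalityI subsetI)
  fix T assume "T \<in> {T. rook_placement (K \<union> N) T \<and> T \<inter> N \<noteq> {}}"
  then obtain x where T: "rook_placement (K \<union> N) T" and x: "x \<in> T" "x \<in> N" by auto
  let ?Q = "T - {x}"
  have "rook_placement K ?Q" using rook_placement_remove_line_cell[OF T N x] .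
  moreover have "non_attacked ?Q x"
    using T x rook_placement_insert_iff[of x ?Q "K \<union> N"] by (simp add: insert_absorb)
  moreover have "T = insert x ?Q" using x by auto
  ultimately show "T \<in> (\<lambda>(Q, x). insert x Q) ` (SIGMA Q:{Q. rook_placement K Q}. {x \<in> N. non_attacked Q x})"
    using x by blast
next
  fix T assume "T \<in> (\<lambda>(Q, x). insert x Q) ` (SIGMA Q:{Q. rook_placement K Q}. {x \<in> N. non_attacked Q x})"
  then obtain Q x where Q: "rook_placement K Q" and x: "x \<in> N" "non_attacked Q x" and T: "T = insert x Q"
    by auto
  then have "x \<notin> Q" using disj by (auto simp: rook_placement_def)
  moreover have "rook_placement (K \<union> N) Q" using Q by (auto simp: rook_placement_def)
  ultimately show "T \<in> {T. rook_placement (K \<union> N) T \<and> T \<inter> N \<noteq> {}}"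
    using rook_placement_insert_iff[of x Q "K \<union> N"] x T by auto
qed

lemma rook_placements_Un_line:
  fixes k p :: nat
  assumes "finite K" and disj: "K \<inter> N = {}" and N: "mutually_attacking N"
    and marked_N: "\<forall>x\<in>N. marked x = e"
  defines "I \<equiv> {Q. rook_placement K Q \<and> Suc (card Q) = k \<and> card {x \<in> Q. marked x} + of_bool e = p}"
  shows "rook_placements (K \<union> N) marked k p =
           rook_placements K marked k p \<union> (\<lambda>(Q, x). insert x Q) ` (SIGMA Q:I. {x \<in> N. non_attacked Q x})"
proof -
  have insert_props: "card (insert x Q) = Suc (card Q)"
      "card {y \<in> insert x Q. marked y} = card {y \<in> Q. marked y} + of_bool e"
    if "rook_placement K Q" "x \<in> N" for Q x
  proof -
    from that disj \<open>finite K\<close> have "x \<notin> Q" "finite Q"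
      by (auto simp: rook_placement_def intro: finite_subset)
    then show "card (insert x Q) = Suc (card Q)"
        "card {y \<in> insert x Q. marked y} = card {y \<in> Q. marked y} + of_bool e"
      using card_filter_insert[of Q x marked] marked_N that by auto
  qed
  note meeting = rook_placements_meeting_line[OF disj N]
  let ?S = "SIGMA Q:I. {x \<in> N. non_attacked Q x}"
  show ?thesis
  proof (intro equalityI subsetI)
    fix T assume T: "T \<in> rook_placements (K \<union> N) marked k p"
    show "T \<in> rook_placements K marked k p \<union> (\<lambda>(Q, x). insert x Q) ` ?S"
    proof (cases "T \<inter> N = {}")
      case True
      with T show ?thesis by (auto simp: rook_placements_def rook_placement_def)
    next
      case False
      with T have "T \<in> {T. rook_placement (K \<union> N) T \<and> T \<inter> N \<noteq> {}}"
        by (simp add: rook_placements_def)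
      then obtain Q x where "rook_placement K Q" "x \<in> N" "non_attacked Q x" "T = insert x Q"
        unfolding meeting by auto
      with T insert_props[of Q x] show ?thesis by (auto simp: rook_placements_def I_def)
    qed
  next
    fix T assume "T \<in> rook_placements K marked k p \<union> (\<lambda>(Q, x). insert x Q) ` ?S"
    then consider "T \<in> rook_placements K marked k p"
      | Q x where "Q \<in> I" "x \<in> N" "non_attacked Q x" "T = insert x Q" by auto
    then show "T \<in> rook_placements (K \<union> N) marked k p"
    proof cases
      case 1
      then show ?thesis by (auto simp: rook_placements_def rook_placement_def)
    next
      case 2
      then have "rook_placement (K \<union> N) T" using meeting by (auto simp: I_def)
      with 2 insert_props[of Q x] show ?thesis by (auto simp: rook_placements_def I_def)
    qed
  qed
qed

lemma card_rook_placements_Un_line: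
  fixes k p :: nat
  assumes "finite K" "finite N" and disj: "K \<inter> N = {}" and N: "mutually_attacking N"
    and marked_N: "\<forall>x\<in>N. marked x = e"
  defines "I \<equiv> {Q. rook_placement K Q \<and> Suc (card Q) = k \<and> card {x \<in> Q. marked x} + of_bool e = p}"
  shows "card (rook_placements (K \<union> N) marked k p) =
           card (rook_placements K marked k p) + (\<Sum>Q\<in>I. card {x \<in> N. non_attacked Q x})"
proof -
  let ?S = "SIGMA Q:I. {x \<in> N. non_attacked Q x}"
  let ?ins = "\<lambda>(Q, x). insert x Q"
  have "rook_placements K marked k p \<inter> ?ins ` ?S = {}"
    using disj by (fastforce simp: rook_placements_def rook_placement_def)
  moreover have "inj_on ?ins ?S"
  proof (rule inj_onI)
    fix a b assume "a \<in> ?S" "b \<in> ?S" and eq: "?ins a = ?ins b"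
    moreover obtain Q x Q' x' where ab: "a = (Q, x)" "b = (Q', x')" by (metis surj_pair)
    ultimately have "Q \<subseteq> K" "Q' \<subseteq> K" "x \<in> N" "x' \<in> N" by (auto simp: I_def rook_placement_def)
    with disj have "x \<notin> Q" "x' \<notin> Q'" "x \<notin> Q'" by auto
    moreover from eq ab \<open>x \<notin> Q'\<close> have "x = x'" by auto
    ultimately show "a = b" using eq ab by (simp add: insert_ident)
  qed
  moreover have "finite I"
    by (rule finite_subset[of _ "Pow K"]) (use \<open>finite K\<close> in \<open>auto simp: I_def rook_placement_def\<close>)
  ultimately show ?thesis
    using rook_placements_Un_line[OF \<open>finite K\<close> disj N marked_N, of k p] \<open>finite K\<close> \<open>finite N\<close>
    by (simp add: I_def card_Un_disjoint finite_rook_placements card_image card_SigmaI)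
qed

lemma rook_count_Un_line:
  assumes "finite K" "finite N" "K \<inter> N = {}" "mutually_attacking N" "\<forall>x\<in>N. marked x = e"
    and free: "\<And>Q. rook_placement K Q \<Longrightarrow> int (card Q) = k - 1 \<Longrightarrow>
                 int (card {x \<in> Q. marked x}) = p - of_bool e \<Longrightarrow>
                 int (card {x \<in> N. non_attacked Q x}) = c"
  shows "rook_count (K \<union> N) marked k p =
           rook_count K marked k p + c * rook_count K marked (k - 1) (p - of_bool e)"
proof (cases "k < 0 \<or> p < 0")
  case True
  then show ?thesis by (auto simp: rook_count_def)
next
  case False
  define I where "I = {Q. rook_placement K Q \<and> Suc (card Q) = nat k \<and>
                           card {x \<in> Q. marked x} + of_bool e = nat p}"
  have "int (\<Sum>Q\<in>I. card {x \<in> N. non_attacked Q x}) = (\<Sum>Q\<in>I. c)"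
    unfolding of_nat_sum using False by (intro sum.cong refl free) (auto simp: I_def)
  also have "\<dots> = c * int (card I)" by simp
  also have "int (card I) = rook_count K marked (k - 1) (p - of_bool e)"
  proof (cases "k - 1 < 0 \<or> p - of_bool e < 0")
    case True
    with False have "I = {}" by (auto simp: I_def)
    with True show ?thesis by (simp add: rook_count_def)
  next
    case False': False
    with False have "I = rook_placements K marked (nat (k - 1)) (nat (p - of_bool e))"
      by (auto simp: I_def rook_placements_def)
    with False' show ?thesis by (simp add: rook_count_def)
  qed
  finally show ?thesis
    using card_rook_placements_Un_line[OF assms(1-5), of "nat k" "nat p"] False
    by (simp add: rook_count_def I_def)
qed

section \<open>Anassas as rooks\<close>

definition rook_board :: "nat \<Rightarrow> (nat \<times> (nat + nat)) set" where
  "rook_board m =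
     {(i, Inl l) | i l. 1 \<le> i \<and> i \<le> l \<and> l \<le> m} \<union> {(i, Inr d) | i d. i \<le> m \<and> 1 \<le> d \<and> d < i}"

definition cell_of :: "nat \<Rightarrow> nat \<times> nat \<Rightarrow> nat \<times> (nat + nat)" where
  "cell_of m x = (fst x, if snd x < fst x then Inr (fst x - snd x) else Inl (m + fst x - snd x))"

definition square_of :: "nat \<Rightarrow> nat \<times> (nat + nat) \<Rightarrow> nat \<times> nat" where
  "square_of m y = (fst y, case snd y of Inl l \<Rightarrow> m + fst y - l | Inr d \<Rightarrow> fst y - d)"

definition lower_cell :: "nat \<times> (nat + nat) \<Rightarrow> bool" where
  "lower_cell x \<longleftrightarrow> \<not> isl (snd x)"

lemma cell_of_square_of:
  "y \<in> rook_board m \<Longrightarrow> square_of m y \<in> board m \<and> cell_of m (square_of m y) = y"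
  unfolding board_def rook_board_def cell_of_def square_of_def by auto

lemma square_of_cell_of:
  "x \<in> board m \<Longrightarrow> cell_of m x \<in> rook_board m \<and> square_of m (cell_of m x) = x"
  unfolding board_def rook_board_def cell_of_def square_of_def by (cases x) auto

lemma bij_betw_cell_of: "bij_betw (cell_of m) (board m) (rook_board m)"
  by (rule bij_betw_byWitness[where f' = "square_of m"]) (use cell_of_square_of square_of_cell_of in blast)+

lemma attacks_iff_cell_of:
  "x \<in> board m \<Longrightarrow> y \<in> board m \<Longrightarrow>
     attacks x y \<longleftrightarrow>
       x \<noteq> y \<and> (fst (cell_of m x) = fst (cell_of m y) \<or> snd (cell_of m x) = snd (cell_of m y))"
  unfolding board_def attacks_def cell_of_def by (cases x, cases y) auto

lemma lower_cell_cell_of: "lower_cell (cell_of m x) \<longleftrightarrow> snd x < fst x"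
  by (simp add: lower_cell_def cell_of_def)

lemma non_attacking_iff_rook_placement:
  assumes "B \<subseteq> board m"
  shows "non_attacking B \<longleftrightarrow> rook_placement (rook_board m) (cell_of m ` B)"
proof -
  have inj: "inj_on (cell_of m) B"
    using bij_betw_imp_inj_on[OF bij_betw_cell_of] assms by (rule inj_on_subset)
  have "non_attacking B \<longleftrightarrow> inj_on (fst \<circ> cell_of m) B \<and> inj_on (snd \<circ> cell_of m) B"
    using assms attacks_iff_cell_of[of _ m] unfolding non_attacking_def inj_on_def comp_def by (blast dest: subsetD)
  also have "\<dots> \<longleftrightarrow> inj_on fst (cell_of m ` B) \<and> inj_on snd (cell_of m ` B)"
    by (simp add: comp_inj_on_iff[OF inj])
  also have "\<dots> \<longleftrightarrow> rook_placement (rook_board m) (cell_of m ` B)"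
    using assms bij_betw_imp_surj_on[OF bij_betw_cell_of] by (auto simp: rook_placement_def)
  finally show ?thesis .
qed

lemma card_image_cell_of:
  assumes "B \<subseteq> board m"
  shows "card (cell_of m ` B) = card B"
    and "card {y \<in> cell_of m ` B. lower_cell y} = card {x \<in> B. snd x < fst x}"
proof -
  have inj: "inj_on (cell_of m) B"
    using bij_betw_imp_inj_on[OF bij_betw_cell_of] assms by (rule inj_on_subset)
  then have "inj_on (cell_of m) {x \<in> B. snd x < fst x}" by (rule inj_on_subset) blast
  moreover have "{y \<in> cell_of m ` B. lower_cell y} = cell_of m ` {x \<in> B. snd x < fst x}"
    by (auto simp: lower_cell_cell_of)
  ultimately show "card (cell_of m ` B) = card B"
      "card {y \<in> cell_of m ` B. lower_cell y} = card {x \<in> B. snd x < fst x}"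
    using inj by (simp_all add: card_image)
qed

lemma A_S_eq_rook_count: "A_S m k p = rook_count (rook_board m) lower_cell k p"
proof (cases "k < 0 \<or> p < 0")
  case True
  then show ?thesis by (simp add: A_S_def rook_count_def)
next
  case False
  let ?X = "{B. B \<subseteq> board m \<and> card B = nat k \<and> non_attacking B \<and> card {x \<in> B. snd x < fst x} = nat p}"
  have "card ?X = card (image (cell_of m) ` ?X)"
  proof (rule card_image[symmetric])
    show "inj_on (image (cell_of m)) ?X"
      using inj_on_image_Pow[OF bij_betw_imp_inj_on[OF bij_betw_cell_of]] by (rule inj_on_subset) auto
  qed
  also have "image (cell_of m) ` ?X = rook_placements (rook_board m) lower_cell (nat k) (nat p)"
  proof (intro equalityI subsetI)
    fix T assume "T \<in> image (cell_of m) ` ?X"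
    then obtain B where "B \<in> ?X" "T = cell_of m ` B" by blast
    then show "T \<in> rook_placements (rook_board m) lower_cell (nat k) (nat p)"
      using card_image_cell_of[of B m] non_attacking_iff_rook_placement[of B m]
      by (simp add: rook_placements_def)
  next
    fix T assume T: "T \<in> rook_placements (rook_board m) lower_cell (nat k) (nat p)"
    then have "T \<subseteq> cell_of m ` board m"
      using bij_betw_imp_surj_on[OF bij_betw_cell_of] by (simp add: rook_placements_def rook_placement_def)
    then obtain B where B: "B \<subseteq> board m" "T = cell_of m ` B" by (auto simp: subset_image_iff)
    with T have "B \<in> ?X"
      using card_image_cell_of[of B m] non_attacking_iff_rook_placement[of B m]
      by (simp add: rook_placements_def)
    with B show "T \<in> image (cell_of m) ` ?X" by blast
  qed
  finally have "card ?X = card (rook_placements (rook_board m) lower_cell (nat k) (nat p))" .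
  with False show ?thesis by (simp add: A_S_def rook_count_def)
qed

lemma rook_board_Suc:
  "rook_board (Suc n) =
     rook_board n \<union> (\<lambda>d. (Suc n, Inr d)) ` {1..n} \<union> (\<lambda>i. (i, Inl (Suc n))) ` {1..Suc n}"
  by (auto simp: rook_board_def le_Suc_eq less_Suc_eq)

lemma card_non_attacked_new_column:
  assumes Q: "rook_placement (rook_board n) Q"
  shows "card {x \<in> (\<lambda>d. (Suc n, Inr d)) ` {1..n}. non_attacked Q x} + card {x \<in> Q. lower_cell x} = n"
proof -
  let ?lower = "{x \<in> Q. lower_cell x}"
  let ?D = "{d. Inr d \<in> snd ` Q}"
  have D: "?D \<subseteq> {1..n}"
    using Q by (auto simp: rook_placement_def rook_board_def)
  have "inj_on (\<lambda>x. projr (snd x)) ?lower"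
  proof (rule inj_onI)
    fix x y assume "x \<in> ?lower" "y \<in> ?lower" "projr (snd x) = projr (snd y)"
    then have "x \<in> Q" "y \<in> Q" "snd x = snd y" by (auto simp: lower_cell_def intro: sum.expand)
    with Q show "x = y" by (auto simp: rook_placement_def dest: inj_onD)
  qed
  moreover have "?D = (\<lambda>x. projr (snd x)) ` ?lower"
    by (force simp: lower_cell_def image_iff)
  ultimately have card_D: "card ?D = card ?lower" by (simp add: card_image)
  have "fst y \<noteq> Suc n" if "y \<in> Q" for y
    using Q that by (auto simp: rook_placement_def rook_board_def)
  then have "{x \<in> (\<lambda>d. (Suc n, Inr d)) ` {1..n}. non_attacked Q x} = (\<lambda>d. (Suc n, Inr d)) ` ({1..n} - ?D)"
    by (fastforce simp: non_attacked_def image_iff)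
  then have "card {x \<in> (\<lambda>d. (Suc n, Inr d)) ` {1..n}. non_attacked Q x} = card ({1..n} - ?D)"
    by (simp add: card_image inj_on_def)
  also have "\<dots> = n - card ?lower"
    using D card_D by (simp add: card_Diff_subset finite_subset)
  finally show ?thesis
    using D card_D card_mono[OF _ D] by simp
qed

lemma card_non_attacked_new_row:
  assumes Q: "rook_placement (rook_board n \<union> (\<lambda>d. (Suc n, Inr d)) ` {1..n}) Q"
  shows "card {x \<in> (\<lambda>i. (i, Inl (Suc n))) ` {1..Suc n}. non_attacked Q x} + card Q = Suc n"
proof -
  have cols: "fst ` Q \<subseteq> {1..Suc n}" and "card (fst ` Q) = card Q"
    using Q by (auto simp: rook_placement_def rook_board_def card_image)
  have "snd y \<noteq> Inl (Suc n)" if "y \<in> Q" for y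
    using Q that by (auto simp: rook_placement_def rook_board_def)
  then have "{x \<in> (\<lambda>i. (i, Inl (Suc n))) ` {1..Suc n}. non_attacked Q x} =
      (\<lambda>i. (i, Inl (Suc n))) ` ({1..Suc n} - fst ` Q)"
    by (fastforce simp: non_attacked_def image_iff)
  then have "card {x \<in> (\<lambda>i. (i, Inl (Suc n))) ` {1..Suc n}. non_attacked Q x} = card ({1..Suc n} - fst ` Q)"
    by (simp add: card_image inj_on_def)
  also have "\<dots> = Suc n - card Q"
    using cols \<open>card (fst ` Q) = card Q\<close> by (simp add: card_Diff_subset finite_subset)
  finally show ?thesis
    using cols \<open>card (fst ` Q) = card Q\<close> card_mono[OF _ cols] by simp
qed

lemma A_S_Suc:
  "A_S (Suc n) k p = A_S n k p + (int (Suc n) - k + 1) * A_S n (k - 1) p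
     + (int (Suc n) - p) * A_S n (k - 1) (p - 1)
     + (int (Suc n) - p) * (int (Suc n) - k + 1) * A_S n (k - 2) (p - 1)"
proof -
  let ?K = "rook_board n" and ?C = "(\<lambda>d. (Suc n, Inr d)) ` {1..n}"
    and ?R = "(\<lambda>i. (i, Inl (Suc n))) ` {1..Suc n}"
  have finite_K: "finite ?K"
    by (rule finite_subset[of _ "{0..n} \<times> (Inl ` {0..n} \<union> Inr ` {0..n})"])
       (auto simp: rook_board_def)
  have column: "rook_count (?K \<union> ?C) lower_cell k p =
      rook_count ?K lower_cell k p + (int (Suc n) - p) * rook_count ?K lower_cell (k - 1) (p - 1)" for k p
  proof -
    have "rook_count (?K \<union> ?C) lower_cell k p =
        rook_count ?K lower_cell k p + (int (Suc n) - p) * rook_count ?K lower_cell (k - 1) (p - of_bool True)"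
    proof (rule rook_count_Un_line[OF finite_K])
      fix Q assume "rook_placement ?K Q" "int (card {x \<in> Q. lower_cell x}) = p - of_bool True"
      then show "int (card {x \<in> ?C. non_attacked Q x}) = int (Suc n) - p"
        using card_non_attacked_new_column[of n Q] by (simp add: of_nat_add[symmetric] del: of_nat_add)
    qed (auto simp: rook_board_def mutually_attacking_def lower_cell_def)
    then show ?thesis by simp
  qed
  have row: "rook_count (?K \<union> ?C \<union> ?R) lower_cell k p =
      rook_count (?K \<union> ?C) lower_cell k p
        + (int (Suc n) - k + 1) * rook_count (?K \<union> ?C) lower_cell (k - 1) p" for k p
  proof -
    have "rook_count (?K \<union> ?C \<union> ?R) lower_cell k p =
        rook_count (?K \<union> ?C) lower_cell k p
          + (int (Suc n) - k + 1) * rook_count (?K \<union> ?C) lower_cell (k - 1) (p - of_bool False)"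
    proof (rule rook_count_Un_line)
      fix Q assume "rook_placement (?K \<union> ?C) Q" "int (card Q) = k - 1"
      then show "int (card {x \<in> ?R. non_attacked Q x}) = int (Suc n) - k + 1"
        using card_non_attacked_new_row[of n Q] by (simp add: of_nat_add[symmetric] del: of_nat_add)
    qed (use finite_K in \<open>auto simp: rook_board_def mutually_attacking_def lower_cell_def\<close>)
    then show ?thesis by simp
  qed
  show ?thesis
    unfolding A_S_eq_rook_count rook_board_Suc row column by (simp add: algebra_simps)
qed

section \<open>The closed form\<close>

definition Stirling_int :: "nat \<Rightarrow> int \<Rightarrow> int" where
  "Stirling_int n r = (if r < 0 then 0 else int (Stirling n (nat r)))"

lemma Stirling2_ext_of_nat: "Stirling2_ext (int n) r = Stirling_int n r"
  by (cases "n = 0") (auto simp: Stirling2_ext_def Stirling_int_def)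

lemma Stirling2_ext_Suc_of_nat: "Stirling2_ext (int m + 1) r = Stirling_int (Suc m) r"
  using Stirling2_ext_of_nat[of "Suc m" r] by (simp add: add.commute)

lemma Stirling_int_Suc: "Stirling_int (Suc n) r = Stirling_int n (r - 1) + r * Stirling_int n r"
proof (cases "r \<le> 0")
  case True
  then show ?thesis by (cases "r = 0") (auto simp: Stirling_int_def)
next
  case False
  define s where "s = nat (r - 1)"
  with False have "nat r = Suc s" "nat (r - 1) = s" "r = int (Suc s)" by auto
  then show ?thesis by (simp add: Stirling_int_def algebra_simps)
qed

lemma Stirling_int_eq_0: "r < 0 \<or> int n < r \<Longrightarrow> Stirling_int n r = 0"
  by (auto simp: Stirling_int_def)

lemma Stirling_int_same [simp]: "Stirling_int n (int n) = 1"
  by (simp add: Stirling_int_def)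

lemma ffact_int_0 [simp]: "ffact_int x 0 = 1"
  by (simp add: ffact_int_def)

lemma ffact_int_Suc: "ffact_int x (Suc j) = ffact_int x j * (x - int j)"
  by (simp add: ffact_int_def)

lemma ffact_int_Suc_shift: "ffact_int x (Suc j) = x * ffact_int (x - 1) j"
  unfolding ffact_int_def prod.lessThan_Suc_shift by (simp add: algebra_simps)

lemma Suc_times_binomial_eq_diff:
  "int (Suc k) * int (n choose Suc k) = (int n - int k) * int (n choose k)"
proof (cases "k \<le> n")
  case True
  have "Suc k * (n choose Suc k) = (n - k) * (n choose k)"
    by (simp only: binomial_absorption binomial_absorb_comp)
  with True show ?thesis by (metis of_nat_diff of_nat_mult)
next
  case False
  then show ?thesis by (simp add: binomial_eq_0)
qed

lemma sum_atMost_shift: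
  fixes g S :: "nat \<Rightarrow> 'a::comm_semiring_0"
  assumes "\<And>j. p < j \<Longrightarrow> g j = 0" and "p + d \<le> N"
  shows "(\<Sum>j\<le>p. g j * S (j + d)) = (\<Sum>u\<le>N. (if u < d then 0 else g (u - d)) * S u)"
proof -
  have "(\<Sum>u\<le>N. (if u < d then 0 else g (u - d)) * S u) = (\<Sum>u=d..N. g (u - d) * S u)"
    by (rule sum.mono_neutral_cong_right) auto
  also have "\<dots> = (\<Sum>j=0..N - d. g j * S (j + d))"
    using sum.shift_bounds_cl_nat_ivl[of "\<lambda>u. g (u - d) * S u" 0 d "N - d"] assms(2) by simp
  also have "\<dots> = (\<Sum>j\<le>p. g j * S (j + d))"
    by (rule sum.mono_neutral_cong_right) (use assms in auto)
  finally show ?thesis ..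
qed

definition A_coeff :: "nat \<Rightarrow> nat \<Rightarrow> nat \<Rightarrow> nat \<Rightarrow> int" where
  "A_coeff m p q j =
     ffact_int (int m - int (p + q) + int j) j * int ((q - 1) choose j) * int ((p + q - j) choose q)"

text \<open>The sum of the theorem for k = p + q with q \<ge> 1, where both binomial coefficients have
  natural arguments.\<close>

definition A_sum :: "nat \<Rightarrow> nat \<Rightarrow> nat \<Rightarrow> int" where
  "A_sum m p q = (\<Sum>j\<le>p. A_coeff m p q j * Stirling_int (Suc m) (int m - int (p + q) + int j + 1))"

lemma A_coeff_eq_0: "1 \<le> q \<Longrightarrow> p < j \<Longrightarrow> A_coeff m p q j = 0"
  by (simp add: A_coeff_def binomial_eq_0)

lemma A_sum_0: "A_sum m 0 q = Stirling_int (Suc m) (int m - int q + 1)"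
  by (simp add: A_sum_def A_coeff_def)

lemma A_sum_1: "A_sum m p (Suc 0) = int (Suc p) * Stirling_int (Suc m) (int m - int p)"
proof -
  have "A_sum m p (Suc 0) = (\<Sum>j\<le>p. if j = 0 then int (Suc p) * Stirling_int (Suc m) (int m - int p) else 0)"
    unfolding A_sum_def A_coeff_def by (rule sum.cong) auto
  then show ?thesis by simp
qed

lemma A_coeff_factors:
  fixes n p q w :: nat
  assumes "2 \<le> q" and "w \<le> Suc p"
  defines "x \<equiv> int n - int (p + q) + int w" and "N \<equiv> p + q - w"
  shows "A_coeff (Suc n) (Suc p) q (Suc w) =
           (x + 1) * ffact_int x w * int ((q - 1) choose Suc w) * int (N choose q)"
    and "A_coeff (Suc n) (Suc p) q w =
           ffact_int x w * int ((q - 1) choose w) * (int (N choose q) + int (N choose (q - 1)))"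
    and "A_coeff n (Suc p) q (Suc w) =
           ffact_int x w * (x - int w) * int ((q - 1) choose Suc w) * int (N choose q)"
    and "A_coeff n (Suc p) (q - 1) w = ffact_int x w * int ((q - 2) choose w) * int (N choose (q - 1))"
    and "A_coeff n p q w = ffact_int x w * int ((q - 1) choose w) * int (N choose q)"
    and "w = Suc v \<Longrightarrow>
           (x - int v) * A_coeff n p (q - 1) v = ffact_int x w * int ((q - 2) choose v) * int (N choose (q - 1))"
proof -
  obtain q0 where q0: "q = Suc (Suc q0)" using assms(1) by (metis add_2_eq_Suc le_Suc_ex)
  have "Suc p + q - w = Suc N" using assms by (simp add: N_def)
  then show "A_coeff (Suc n) (Suc p) q w =
      ffact_int x w * int ((q - 1) choose w) * (int (N choose q) + int (N choose (q - 1)))"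
    by (simp add: A_coeff_def x_def q0 algebra_simps)
  show "A_coeff (Suc n) (Suc p) q (Suc w) =
      (x + 1) * ffact_int x w * int ((q - 1) choose Suc w) * int (N choose q)"
    by (simp add: A_coeff_def ffact_int_Suc_shift x_def N_def algebra_simps)
  show "A_coeff n (Suc p) q (Suc w) =
      ffact_int x w * (x - int w) * int ((q - 1) choose Suc w) * int (N choose q)"
    by (simp add: A_coeff_def ffact_int_Suc x_def N_def algebra_simps)
  show "A_coeff n (Suc p) (q - 1) w = ffact_int x w * int ((q - 2) choose w) * int (N choose (q - 1))"
    by (simp add: A_coeff_def x_def N_def q0 algebra_simps)
  show "A_coeff n p q w = ffact_int x w * int ((q - 1) choose w) * int (N choose q)"
    by (simp add: A_coeff_def x_def N_def algebra_simps)
  show "(x - int v) * A_coeff n p (q - 1) v = ffact_int x w * int ((q - 2) choose v) * int (N choose (q - 1))"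
    if "w = Suc v"
    using that by (simp add: A_coeff_def ffact_int_Suc x_def N_def q0 algebra_simps)
qed

lemma A_coeff_rec:
  fixes n p q u :: nat
  assumes "2 \<le> q" and "u \<le> Suc (Suc p)"
  defines "r \<equiv> int n - int (p + q)"
  shows "A_coeff (Suc n) (Suc p) q u + (if u < 1 then 0 else (r + int u) * A_coeff (Suc n) (Suc p) q (u - 1))
       = A_coeff n (Suc p) q u + (r + 1) * (if u < 1 then 0 else A_coeff n (Suc p) (q - 1) (u - 1))
         + (r + int q) * (if u < 1 then 0 else A_coeff n p q (u - 1))
         + (r + int q) * (r + 1) * (if u < 2 then 0 else A_coeff n p (q - 1) (u - 2))"
proof (cases u)
  case 0
  then show ?thesis by (simp add: A_coeff_def)
next
  case (Suc w)
  define F where "F = ffact_int (r + int w) w"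
  define A where "A = int ((q - 1) choose u)"
  define B where "B = int ((q - 1) choose w)"
  define b where "b = int ((q - 2) choose w)"
  define c where "c = (if w = 0 then 0 else int ((q - 2) choose (w - 1)))"
  define X where "X = int ((p + q - w) choose q)"
  define Y where "Y = int ((p + q - w) choose (q - 1))"
  have "w \<le> Suc p" using assms(2) Suc by simp
  note factors = A_coeff_factors[OF assms(1) this, where n = n, folded r_def]
  have last: "(r + 1) * (if u < 2 then 0 else A_coeff n p (q - 1) (u - 2)) = F * c * Y"
    using factors(6)[where v = "w - 1"] by (cases w) (simp_all add: Suc F_def c_def Y_def)
  have "int u * A = (int q - int u) * B"
    using Suc_times_binomial_eq_diff[of w "q - 1"] assms Suc by (simp add: A_def B_def of_nat_diff)
  moreover have "(int u - 1) * b = (int q - int u) * c"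
    using Suc_times_binomial_eq_diff[of "w - 1" "q - 2"] assms Suc
    by (cases w) (simp_all add: b_def c_def of_nat_diff)
  moreover have "B = b + c"
  proof -
    obtain q0 where "q = Suc (Suc q0)" using assms(1) by (metis add_2_eq_Suc le_Suc_ex)
    then show ?thesis by (cases w) (simp_all add: B_def b_def c_def)
  qed
  ultimately have "(r + int u) * F * A * X + (r + int u) * (F * B * (X + Y)) =
      F * r * A * X + (r + 1) * (F * b * Y) + (r + int q) * (F * B * X) + (r + int q) * (F * c * Y)"
    by algebra
  then show ?thesis
    using factors(1-5) last Suc
    by (simp only: mult.assoc[of "r + int q"]) (simp add: F_def A_def B_def b_def X_def Y_def algebra_simps)
qed

lemma A_sum_eq_shifted_sum:
  assumes "1 \<le> q" "p + d \<le> N" "int m - int (p + q) + 1 = r + int d"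
  shows "A_sum m p q = (\<Sum>u\<le>N. (if u < d then 0 else A_coeff m p q (u - d)) * Stirling_int (Suc m) (r + int u))"
proof -
  have arg: "int m - int (p + q) + int j + 1 = r + int (j + d)" for j
    using assms(3) by simp
  have "A_sum m p q = (\<Sum>j\<le>p. A_coeff m p q j * Stirling_int (Suc m) (r + int (j + d)))"
    unfolding A_sum_def arg ..
  also have "\<dots> = (\<Sum>u\<le>N. (if u < d then 0 else A_coeff m p q (u - d)) * Stirling_int (Suc m) (r + int u))"
    using assms by (intro sum_atMost_shift[where S = "\<lambda>u. Stirling_int (Suc m) (r + int u)"] A_coeff_eq_0)
  finally show ?thesis .
qed

lemma A_sum_rec:
  fixes n p q :: nat
  assumes "2 \<le> q"
  defines "r \<equiv> int n - int (p + q)"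
  shows "A_sum (Suc n) (Suc p) q = A_sum n (Suc p) q + (r + 1) * A_sum n (Suc p) (q - 1)
           + (r + int q) * A_sum n p q + (r + int q) * (r + 1) * A_sum n p (q - 1)"
proof -
  define S where "S u = Stirling_int (Suc n) (r + int u)" for u
  let ?N = "Suc (Suc p)"
  let ?c = "A_coeff (Suc n) (Suc p) q"
  have "A_sum (Suc n) (Suc p) q =
      (\<Sum>j\<le>Suc p. ?c j * S (j + 0)) + (\<Sum>j\<le>Suc p. ((r + int j + 1) * ?c j) * S (j + 1))"
    unfolding A_sum_def S_def sum.distrib[symmetric]
    by (intro sum.cong) (auto simp: Stirling_int_Suc r_def algebra_simps)
  also have "\<dots> = (\<Sum>u\<le>?N. (if u < 0 then 0 else ?c (u - 0)) * S u)
      + (\<Sum>u\<le>?N. (if u < 1 then 0 else (r + int (u - 1) + 1) * ?c (u - 1)) * S u)"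
    using assms(1) by (intro arg_cong2[where f = "(+)"] sum_atMost_shift) (simp_all add: A_coeff_eq_0)
  also have "\<dots> = (\<Sum>u\<le>?N. (?c u + (if u < 1 then 0 else (r + int u) * ?c (u - 1))) * S u)"
    unfolding sum.distrib[symmetric] by (intro sum.cong) (auto simp: algebra_simps)
  also have "\<dots> = (\<Sum>u\<le>?N. (A_coeff n (Suc p) q u
         + (r + 1) * (if u < 1 then 0 else A_coeff n (Suc p) (q - 1) (u - 1))
         + (r + int q) * (if u < 1 then 0 else A_coeff n p q (u - 1))
         + (r + int q) * (r + 1) * (if u < 2 then 0 else A_coeff n p (q - 1) (u - 2))) * S u)"
    (is "(\<Sum>u\<le>_. ?L u * S u) = (\<Sum>u\<le>_. ?R u * S u)")
  proof (rule sum.cong[OF refl])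
    fix u assume "u \<in> {..?N}"
    then have "?L u = ?R u" unfolding r_def by (intro A_coeff_rec assms(1)) simp
    then show "?L u * S u = ?R u * S u" by simp
  qed
  also have "\<dots> = A_sum n (Suc p) q + (r + 1) * A_sum n (Suc p) (q - 1)
           + (r + int q) * A_sum n p q + (r + int q) * (r + 1) * A_sum n p (q - 1)"
  proof -
    have "A_sum n (Suc p) q = (\<Sum>u\<le>?N. (if u < 0 then 0 else A_coeff n (Suc p) q (u - 0)) * S u)"
      "A_sum n (Suc p) (q - 1) = (\<Sum>u\<le>?N. (if u < 1 then 0 else A_coeff n (Suc p) (q - 1) (u - 1)) * S u)"
      "A_sum n p q = (\<Sum>u\<le>?N. (if u < 1 then 0 else A_coeff n p q (u - 1)) * S u)"
      "A_sum n p (q - 1) = (\<Sum>u\<le>?N. (if u < 2 then 0 else A_coeff n p (q - 1) (u - 2)) * S u)"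
      unfolding S_def using assms(1) by (intro A_sum_eq_shifted_sum; simp add: r_def)+
    then show ?thesis
      by (simp add: sum_distrib_left sum.distrib[symmetric] algebra_simps)
  qed
  finally show ?thesis .
qed

text \<open>For p = k the sum of the theorem telescopes to S(m, m - k), see Stirling_int_telescope.\<close>

definition A_closed :: "nat \<Rightarrow> int \<Rightarrow> int \<Rightarrow> int" where
  "A_closed m k p =
     (if k < 0 \<or> p < 0 \<or> k < p then 0
      else if p = k then Stirling_int m (int m - k)
      else A_sum m (nat p) (nat (k - p)))"

lemma A_closed_diag: "A_closed m (int k) (int k) = Stirling_int m (int m - int k)"
  by (simp add: A_closed_def)

lemma A_closed_A_sum: "1 \<le> q \<Longrightarrow> A_closed m (int (p + q)) (int p) = A_sum m p q"
  by (simp add: A_closed_def)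

lemma A_closed_eq_0: "k < 0 \<or> p < 0 \<or> k < p \<Longrightarrow> A_closed m k p = 0"
  by (simp add: A_closed_def)

lemma A_closed_Suc_diff_0:
  "A_closed (Suc n) (int k) (int k) = A_closed n (int k) (int k)
     + (int (Suc n) - int k + 1) * A_closed n (int k - 1) (int k)
     + (int (Suc n) - int k) * A_closed n (int k - 1) (int k - 1)
     + (int (Suc n) - int k) * (int (Suc n) - int k + 1) * A_closed n (int k - 2) (int k - 1)"
proof -
  have "A_closed n (int k - 1) (int k - 1) = Stirling_int n (int n - int k + 1)"
    by (cases k) (simp_all add: A_closed_def Stirling_int_eq_0 algebra_simps)
  then show ?thesis
    using Stirling_int_Suc[of n "int (Suc n) - int k"] by (simp add: A_closed_def algebra_simps)
qed

lemma A_closed_Suc_diff_1: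
  "A_closed (Suc n) (int (Suc p)) (int p) = A_closed n (int (Suc p)) (int p)
     + (int (Suc n) - int (Suc p) + 1) * A_closed n (int (Suc p) - 1) (int p)
     + (int (Suc n) - int p) * A_closed n (int (Suc p) - 1) (int p - 1)
     + (int (Suc n) - int p) * (int (Suc n) - int (Suc p) + 1) * A_closed n (int (Suc p) - 2) (int p - 1)"
proof -
  let ?s = "int n + 1 - int p"
  have "A_closed (Suc n) (int (Suc p)) (int p) = int (Suc p) * Stirling_int (Suc (Suc n)) ?s"
    and "A_closed n (int (Suc p)) (int p) = int (Suc p) * Stirling_int (Suc n) (?s - 1)"
    and "A_closed n (int (Suc p) - 1) (int p) = Stirling_int n (?s - 1)"
    by (simp_all add: A_closed_def A_sum_1 algebra_simps)
  moreover have "A_closed n (int (Suc p) - 1) (int p - 1) = int p * Stirling_int (Suc n) ?s"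
    by (cases p) (simp_all add: A_closed_def A_sum_1 algebra_simps)
  moreover have "A_closed n (int (Suc p) - 2) (int p - 1) = Stirling_int n ?s"
    by (cases p) (simp_all add: A_closed_def Stirling_int_eq_0 algebra_simps)
  moreover note Stirling_int_Suc[of "Suc n" ?s] Stirling_int_Suc[of n ?s]
  ultimately show ?thesis by (simp only:) (simp add: algebra_simps)
qed

lemma A_closed_Suc_diff_ge_2:
  assumes "2 \<le> q"
  shows "A_closed (Suc n) (int (p + q)) (int p) = A_closed n (int (p + q)) (int p)
     + (int (Suc n) - int (p + q) + 1) * A_closed n (int (p + q) - 1) (int p)
     + (int (Suc n) - int p) * A_closed n (int (p + q) - 1) (int p - 1)
     + (int (Suc n) - int p) * (int (Suc n) - int (p + q) + 1) * A_closed n (int (p + q) - 2) (int p - 1)"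
proof (cases p)
  case 0
  have "A_closed (Suc n) (int q) 0 = Stirling_int (Suc (Suc n)) (int n + 2 - int q)"
    and "A_closed n (int q) 0 = Stirling_int (Suc n) (int n + 2 - int q - 1)"
    and "A_closed n (int q - 1) 0 = Stirling_int (Suc n) (int n + 2 - int q)"
    using assms by (simp_all add: A_closed_def A_sum_0 nat_diff_distrib algebra_simps)
  moreover note Stirling_int_Suc[of "Suc n" "int n + 2 - int q"]
  ultimately show ?thesis
    using 0 by (simp only:) (simp add: A_closed_eq_0 algebra_simps)
next
  case (Suc p')
  have "A_closed (Suc n) (int (p + q)) (int p) = A_sum (Suc n) p q"
    and "A_closed n (int (p + q)) (int p) = A_sum n p q"
    and "A_closed n (int (p + q) - 1) (int p) = A_sum n p (q - 1)"
    using assms by (simp_all add: A_closed_def nat_diff_distrib)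
  moreover have "A_closed n (int (p + q) - 1) (int p - 1) = A_sum n p' q"
    and "A_closed n (int (p + q) - 2) (int p - 1) = A_sum n p' (q - 1)"
    using assms Suc by (simp_all add: A_closed_def nat_diff_distrib)
  ultimately show ?thesis
    using A_sum_rec[OF assms, of n p'] Suc by (simp add: algebra_simps)
qed

lemma A_closed_Suc:
  assumes "0 \<le> k" "0 \<le> p"
  shows "A_closed (Suc n) k p = A_closed n k p + (int (Suc n) - k + 1) * A_closed n (k - 1) p
     + (int (Suc n) - p) * A_closed n (k - 1) (p - 1)
     + (int (Suc n) - p) * (int (Suc n) - k + 1) * A_closed n (k - 2) (p - 1)"
proof -
  obtain P where P: "p = int P" using assms(2) nonneg_int_cases by blast
  consider "k < p" | "k = p" | "k = p + 1" | "p + 2 \<le> k" by linarith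
  then show ?thesis
  proof cases
    case 1
    then show ?thesis by (simp add: A_closed_eq_0)
  next
    case 2
    then show ?thesis using A_closed_Suc_diff_0[of n P] P by simp
  next
    case 3
    then show ?thesis using A_closed_Suc_diff_1[of n P] P by (simp add: algebra_simps)
  next
    case 4
    define Q where "Q = nat (k - p)"
    with 4 have "2 \<le> Q" "k = p + int Q" by auto
    then show ?thesis using A_closed_Suc_diff_ge_2[of Q n P] P by (simp add: algebra_simps)
  qed
qed

lemma A_closed_0: "A_closed 0 k p = of_bool (k = 0 \<and> p = 0)"
proof -
  have "A_sum 0 P Q = 0" if "1 \<le> Q" for P Q
    unfolding A_sum_def using that by (intro sum.neutral) (auto simp: Stirling_int_def)
  then show ?thesis by (auto simp: A_closed_def Stirling_int_def)
qed

lemma A_S_0: "A_S 0 k p = (if k = 0 \<and> p = 0 then 1 else 0)"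
proof -
  have "{B. B \<subseteq> board 0 \<and> card B = nat k \<and> non_attacking B \<and> card {x \<in> B. snd x < fst x} = nat p} =
      (if nat k = 0 \<and> nat p = 0 then {{}} else {})"
    by (auto simp: board_def non_attacking_def)
  then show ?thesis by (auto simp: A_S_def)
qed

lemma A_S_eq_A_closed: "A_S m k p = A_closed m k p"
proof (induction m arbitrary: k p)
  case 0
  then show ?case by (simp add: A_S_0 A_closed_0)
next
  case (Suc n)
  show ?case
  proof (cases "k < 0 \<or> p < 0")
    case True
    then show ?thesis by (auto simp: A_S_def A_closed_def)
  next
    case False
    then show ?thesis using A_S_Suc[of n k p] A_closed_Suc[of k p n] Suc.IH by simp
  qed
qed

section \<open>The summation formula\<close>

lemma ffact_int_of_nat: "ffact_int (int n) j = fact j * int (n choose j)"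
proof (induction j)
  case 0
  then show ?case by simp
next
  case (Suc j)
  have "ffact_int (int n) (Suc j) = fact j * ((int n - int j) * int (n choose j))"
    by (simp add: ffact_int_Suc Suc.IH)
  also have "\<dots> = fact (Suc j) * int (n choose Suc j)"
    by (simp only: Suc_times_binomial_eq_diff[symmetric]) (simp add: algebra_simps)
  finally show ?case .
qed

lemma binom_ext_of_nat: "binom_ext (int n) (int j) = int (n choose j)"
  by (simp add: binom_ext_def ffact_int_of_nat)

lemma binom_ext_minus_one: "binom_ext (-1) (int j) = (-1) ^ j"
proof -
  have "ffact_int (-1) j = (-1) ^ j * fact j"
    by (induction j) (simp_all add: ffact_int_Suc algebra_simps)
  then show ?thesis by (simp add: binom_ext_def)
qed

lemma binom_ext_0 [simp]: "binom_ext x 0 = 1"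
  by (simp add: binom_ext_def)

lemma Stirling_int_telescope:
  "Stirling_int n r = (\<Sum>j\<le>J. (-1) ^ j * ffact_int (r + int j) j * Stirling_int (Suc n) (r + int j + 1))
     + (-1) ^ Suc J * ffact_int (r + int J + 1) (Suc J) * Stirling_int n (r + int J + 1)"
proof (induction J)
  case 0
  show ?case using Stirling_int_Suc[of n "r + 1"] by (simp add: ffact_int_Suc algebra_simps)
next
  case (Suc J)
  have "ffact_int (r + int (Suc J) + 1) (Suc (Suc J)) = (r + int J + 2) * ffact_int (r + int J + 1) (Suc J)"
    by (simp add: ffact_int_Suc_shift[of _ "Suc J"] algebra_simps)
  then show ?case
    using Suc.IH Stirling_int_Suc[of n "r + int J + 2"] by (simp add: algebra_simps)
qed

lemma A_closed_eq_sum: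
  "A_closed m (int k) (int p) =
     (\<Sum>j=0..p. ffact_int (int m - int k + int j) j
                * binom_ext (int k - int p - 1) (int j)
                * binom_ext (int k - int j) (int k - int p)
                * Stirling2_ext (int m + 1) (int m - int k + int j + 1))"
  (is "_ = (\<Sum>j=0..p. ?t j)")
proof -
  consider "k < p" | "k = p" | "p < k" by linarith
  then show ?thesis
  proof cases
    case 1
    have "?t j = 0" for j
    proof (cases "j \<le> k")
      case True
      with 1 have "binom_ext (int k - int j) (int k - int p) = 0" by (simp add: binom_ext_def)
      then show ?thesis by simp
    next
      case False
      then show ?thesis by (simp add: Stirling2_ext_Suc_of_nat Stirling_int_eq_0)
    qed
    then have "(\<Sum>j=0..p. ?t j) = 0" by (intro sum.neutral) blast
    with 1 show ?thesis by (simp add: A_closed_eq_0)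
  next
    case 2
    have "A_closed m (int k) (int p) =
        (\<Sum>j\<le>k. (-1) ^ j * ffact_int (int m - int k + int j) j * Stirling_int (Suc m) (int m - int k + int j + 1))"
      using Stirling_int_telescope[of m "int m - int k" k] 2
      by (simp add: A_closed_diag Stirling_int_eq_0)
    also have "\<dots> = (\<Sum>j=0..p. ?t j)"
      using 2 by (intro sum.cong) (auto simp: atLeast0AtMost Stirling2_ext_Suc_of_nat binom_ext_minus_one)
    finally show ?thesis .
  next
    case 3
    then have "A_closed m (int k) (int p) = A_sum m p (k - p)"
      using A_closed_A_sum[of "k - p" m p] by simp
    also have "\<dots> = (\<Sum>j=0..p. ?t j)"
      unfolding A_sum_def atLeast0AtMost
    proof (rule sum.cong[OF refl])
      fix j assume "j \<in> {..p}"
      with 3 have nat_diff: "int k - int j = int (k - j)" "int k - int p = int (k - p)"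
          "int (k - p) - 1 = int (k - p - 1)" "p + (k - p) = k" "p + (k - p) - j = k - j"
        by auto
      show "A_coeff m p (k - p) j * Stirling_int (Suc m) (int m - int (p + (k - p)) + int j + 1) = ?t j"
        unfolding A_coeff_def nat_diff binom_ext_of_nat Stirling2_ext_Suc_of_nat ..
    qed
    finally show ?thesis .
  qed
qed

lemma A_closed_k0: "0 \<le> p \<Longrightarrow> A_closed m 0 p = (if p = 0 then 1 else 0)"
  by (simp add: A_closed_def)

lemma A_closed_k1:
  assumes "0 \<le> p"
  shows "A_closed m 1 p = Stirling2_ext (int m + 1) (int m) * (if p = 0 then 1 else 0)
                        + Stirling2_ext (int m) (int m - 1) * (if p = 1 then 1 else 0)"
proof -
  consider "p = 0" | "p = 1" | "1 < p" using assms by linarith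
  then show ?thesis
    by cases (simp_all add: A_closed_def A_sum_0 Stirling2_ext_of_nat Stirling2_ext_Suc_of_nat)
qed

lemma A_closed_p0:
  assumes "0 \<le> k"
  shows "A_closed m k 0 = Stirling2_ext (int m + 1) (int m - k + 1)"
proof -
  have "A_closed m k 0 = Stirling_int (Suc m) (int m - k + 1)"
    using assms Stirling_int_same[of "Suc m"]
    by (cases "k = 0") (simp_all add: A_closed_def A_sum_0 algebra_simps)
  then show ?thesis by (simp add: Stirling2_ext_Suc_of_nat)
qed

theorem theorem3p1:
  shows
  "(\<forall>m::nat. \<forall>k p :: int. m \<ge> 1 \<and> k \<ge> 0 \<and> p \<ge> 0 \<longrightarrow>
      A_S m k p = A_S (m - 1) k p
                + (int m - k + 1) * A_S (m - 1) (k - 1) p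
                + (int m - p) * A_S (m - 1) (k - 1) (p - 1)
                + (int m - p) * (int m - k + 1) * A_S (m - 1) (k - 2) (p - 1))
   \<and> (\<forall>k p :: int. k \<ge> 0 \<and> p \<ge> 0 \<longrightarrow>
      A_S 0 k p = (if k = 0 then 1 else 0) * (if p = 0 then 1 else 0))
   \<and> (\<forall>(m::nat) (p::int). p \<ge> 0 \<longrightarrow> A_S m 0 p = (if p = 0 then 1 else 0))
   \<and> (\<forall>(m::nat) (p::int). p \<ge> 0 \<longrightarrow>
      A_S m 1 p = Stirling2_ext (int m + 1) (int m) * (if p = 0 then 1 else 0)
                + Stirling2_ext (int m) (int m - 1) * (if p = 1 then 1 else 0))
   \<and> (\<forall>(m::nat) (k::int). k \<ge> 0 \<longrightarrow>
      A_S m k 0 = Stirling2_ext (int m + 1) (int m - k + 1))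
   \<and> (\<forall>(m::nat) (k::nat) (p::nat).
      A_S m (int k) (int p) =
        (\<Sum>j=0..p. ffact_int (int m - int k + int j) j
                   * binom_ext (int k - int p - 1) (int j)
                   * binom_ext (int k - int j) (int k - int p)
                   * Stirling2_ext (int m + 1) (int m - int k + int j + 1)))"
proof (intro conjI allI impI)
  fix m :: nat and k p :: int
  assume "1 \<le> m \<and> 0 \<le> k \<and> 0 \<le> p"
  then obtain n where "m = Suc n" by (cases m) auto
  then show "A_S m k p = A_S (m - 1) k p + (int m - k + 1) * A_S (m - 1) (k - 1) p
      + (int m - p) * A_S (m - 1) (k - 1) (p - 1)
      + (int m - p) * (int m - k + 1) * A_S (m - 1) (k - 2) (p - 1)"
    using A_S_Suc[of n k p] by simp
qed (simp_all add: A_S_eq_A_closed A_closed_0 A_closed_k0 A_closed_k1 A_closed_p0 A_closed_eq_sum)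

end
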